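(* Let $G$ be a noncyclic finite $p$-group for some prime $p$. (i) If $N$ and $M$ are normal subgroups of $G$ with $\eta(G) = \eta(G/N) = \eta(G/M)$, then $\eta(G) = \eta(G/NM)$. (ii) There exists a characteristic subgroup $X$ of $G$ such that $\eta(G) = \eta(G/X)$ and such that every normal subgroup $N$ of $G$ with $\eta(G/N) = \eta(G)$ satisfies $N \le X$.
   Context: A cyclic subgroup $C$ of a group $G$ is maximal cyclic if there is no cyclic subgroup $D$ of $G$ with $C < D$. $\eta(G)$ denotes the number of conjugacy classes of maximal cyclic subgroups of $G$. *)

theory Defs
  imports "HOL-Algebra.Algebra"
begin

definition cyclic_subgroups :: "('a, 'b) monoid_scheme \<Rightarrow> 'a set set" where
  "cyclic_subgroups G = {generate G {g} | g. g \<in> carrier G}"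

definition max_cyclic_subgroups :: "('a, 'b) monoid_scheme \<Rightarrow> 'a set set" where
  "max_cyclic_subgroups G =
     {C \<in> cyclic_subgroups G. \<not> (\<exists>D \<in> cyclic_subgroups G. C \<subset> D)}"

definition conj_set :: "('a, 'b) monoid_scheme \<Rightarrow> 'a \<Rightarrow> 'a set \<Rightarrow> 'a set" where
  "conj_set G g H = (\<lambda>h. g \<otimes>\<^bsub>G\<^esub> h \<otimes>\<^bsub>G\<^esub> inv\<^bsub>G\<^esub> g) ` H"

definition max_cyclic_conj_rel :: "('a, 'b) monoid_scheme \<Rightarrow> ('a set \<times> 'a set) set" where
  "max_cyclic_conj_rel G =
     {(C, D). C \<in> max_cyclic_subgroups G \<and> D \<in> max_cyclic_subgroups G \<and>
              (\<exists>g \<in> carrier G. D = conj_set G g C)}"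

definition eta :: "('a, 'b) monoid_scheme \<Rightarrow> nat" where
  "eta G = card (Equiv_Relations.quotient (max_cyclic_subgroups G) (max_cyclic_conj_rel G))"

definition characteristic :: "('a, 'b) monoid_scheme \<Rightarrow> 'a set \<Rightarrow> bool" where
  "characteristic G H \<longleftrightarrow> subgroup H G \<and> (\<forall>f \<in> iso G G. f ` H = H)"

end

theory Submission
  imports Defs
begin

text \<open>In a finite \<open>p\<close>-group \<open>G \<noteq> 1\<close> an element generates a maximal cyclic subgroup iff it
  is not a \<open>p\<close>-th power, so \<open>\<eta>(G)\<close> counts the non-\<open>p\<close>-th powers up to the relation
  \<open>x \<sim> y\<close>: \<open>y\<close> is a power of a conjugate of \<open>x\<close>. For an epimorphism \<open>h : G \<rightarrow> H\<close> (such as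
  \<open>G \<rightarrow> G/N\<close>) the same count for \<open>H\<close>, pulled back to \<open>G\<close>, lives on a subset of the
  non-\<open>p\<close>-th powers of \<open>G\<close> with a coarser relation. Hence \<open>\<eta>(H) = \<eta>(G)\<close> iff neither
  shrinks, which happens iff \<open>ker h\<close> lies in \<open>X = {m. x \<sim> m x for all non-p-th powers x}\<close>.
  This \<open>X\<close> is a characteristic subgroup consisting of \<open>p\<close>-th powers, hence proper; so the
  normal subgroups \<open>N\<close> with \<open>\<eta>(G/N) = \<eta>(G)\<close> are exactly those inside \<open>X\<close>, which gives
  both parts.\<close>

lemma card_quotient_inv_image:
  assumes image: "f ` A = S" and equiv: "equiv S R"
  shows "equiv A (inv_image R f \<inter> A \<times> A)"
    and "card (A // (inv_image R f \<inter> A \<times> A)) = card (S // R)"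
proof -
  let ?R' = "inv_image R f \<inter> A \<times> A"
  show "equiv A ?R'"
  proof (rule equivI)
    show "refl_on A ?R'"
      using equiv image by (auto simp: equiv_def refl_on_def)
    show "sym ?R'"
      using equiv by (auto simp: equiv_def intro!: symI dest: symD)
    show "trans ?R'"
      using equiv by (auto simp: equiv_def intro!: transI dest: transD)
  qed auto
  have R: "R \<subseteq> S \<times> S"
    using equiv by (simp add: equiv_def refl_on_def)
  have R'_class: "?R' `` {a} = A \<inter> f -` (R `` {f a})" if "a \<in> A" for a
    using that by auto
  have "bij_betw (\<lambda>Z. A \<inter> vimage f Z) (S // R) (A // ?R')"
  proof (rule bij_betw_imageI)
    have "f ` (A \<inter> vimage f Z) = Z" if "Z \<in> S // R" for Z
    proof -
      have "Z \<subseteq> f ` A"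
        using that R image by (auto simp: quotient_def)
      then show ?thesis
        by blast
    qed
    then show "inj_on (\<lambda>Z. A \<inter> vimage f Z) (S // R)"
      by (rule inj_on_inverseI[where g = "image f"])
    have "A // ?R' = (\<lambda>a. A \<inter> vimage f (R `` {f a})) ` A"
      using R'_class by (simp add: quotient_def UNION_singleton_eq_range)
    also have "\<dots> = (\<lambda>Z. A \<inter> vimage f Z) ` (S // R)"
      unfolding quotient_def UNION_singleton_eq_range image[symmetric] image_image ..
    finally show "(\<lambda>Z. A \<inter> vimage f Z) ` (S // R) = A // ?R'"
      by simp
  qed
  then show "card (A // ?R') = card (S // R)"
    by (simp add: bij_betw_same_card)
qed

lemma card_quotient_coarsening_eq:
  assumes "finite A" and equiv: "equiv A R" and equiv': "equiv A' R'" and "A' \<subseteq> A"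
    and coarser: "\<And>x y. x \<in> A' \<Longrightarrow> (x, y) \<in> R \<Longrightarrow> (x, y) \<in> R'"
    and card: "card (A' // R') = card (A // R)"
  shows "A' = A \<and> R' = R"
proof -
  define Q where "Q = (\<lambda>a. R `` {a}) ` A'"
  have "Q \<subseteq> A // R"
    using \<open>A' \<subseteq> A\<close> by (auto simp: Q_def quotient_def)
  have "finite (A // R)"
    using \<open>finite A\<close> equiv by (simp add: equiv_def finite_quotient)
  have saturate: "R' `` (R `` {a}) = R' `` {a}" if "a \<in> A'" for a
  proof
    show "R' `` {a} \<subseteq> R' `` (R `` {a})"
      using that \<open>A' \<subseteq> A\<close> equiv by (auto simp: equiv_def refl_on_def)
    show "R' `` (R `` {a}) \<subseteq> R' `` {a}"
      using that coarser equiv' by (auto simp: equiv_def dest: transD)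
  qed
  then have quotient': "A' // R' = Image R' ` Q"
    by (auto simp: Q_def quotient_def image_image)
  have "card (A' // R') \<le> card Q" "card Q \<le> card (A // R)"
    using \<open>Q \<subseteq> A // R\<close> \<open>finite (A // R)\<close> quotient'
    by (auto intro: card_image_le card_mono finite_subset)
  then have Q: "Q = A // R" and inj: "inj_on (Image R') Q"
    using \<open>Q \<subseteq> A // R\<close> \<open>finite (A // R)\<close> card quotient'
    by (metis card_subset_eq le_antisym, metis eq_card_imp_inj_on finite_subset le_antisym)
  have "A \<subseteq> A'"
  proof
    fix a assume "a \<in> A"
    then have "R `` {a} \<in> Q"
      using Q by (auto simp: quotient_def)
    then obtain b where "b \<in> A'" "R `` {b} = R `` {a}"
      by (auto simp: Q_def)
    then have "(b, a) \<in> R'"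
      using coarser eq_equiv_class_iff[OF equiv] \<open>a \<in> A\<close> \<open>A' \<subseteq> A\<close> by blast
    then show "a \<in> A'"
      using equiv_type[OF equiv'] by blast
  qed
  moreover have "R' \<subseteq> R"
  proof clarify
    fix x y assume "(x, y) \<in> R'"
    then have "x \<in> A'" "y \<in> A'" "R' `` {x} = R' `` {y}"
      using equiv_type[OF equiv'] equiv_class_eq[OF equiv'] by auto
    then have "Image R' (R `` {x}) = Image R' (R `` {y})" "R `` {x} \<in> Q" "R `` {y} \<in> Q"
      using saturate by (auto simp: Q_def)
    then have "R `` {x} = R `` {y}"
      using inj_onD[OF inj] by blast
    then show "(x, y) \<in> R"
      using \<open>x \<in> A'\<close> \<open>y \<in> A'\<close> \<open>A' \<subseteq> A\<close> eq_equiv_class_iff[OF equiv] by blast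
  qed
  moreover have "R \<subseteq> R'"
    using coarser \<open>A \<subseteq> A'\<close> equiv_type[OF equiv] by auto
  ultimately show ?thesis
    using \<open>A' \<subseteq> A\<close> by blast
qed

definition pth_powers :: "('a, 'b) monoid_scheme \<Rightarrow> nat \<Rightarrow> 'a set" where
  "pth_powers G p = (\<lambda>y. y [^]\<^bsub>G\<^esub> p) ` carrier G"

text \<open>On the non-\<open>p\<close>-th powers of a finite \<open>p\<close>-group this relation holds iff the cyclic
  subgroups generated by \<open>x\<close> and \<open>y\<close> are conjugate (see \<open>eta_eq_card_quotient\<close>).\<close>
definition conj_power_rel :: "('a, 'b) monoid_scheme \<Rightarrow> nat \<Rightarrow> ('a \<times> 'a) set" where
  "conj_power_rel G p =
     {(x, y). x \<in> carrier G - pth_powers G p \<and> y \<in> carrier G - pth_powers G p \<and>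
              (\<exists>g\<in>carrier G. \<exists>k::nat. y = (g \<otimes>\<^bsub>G\<^esub> x \<otimes>\<^bsub>G\<^esub> inv\<^bsub>G\<^esub> g) [^]\<^bsub>G\<^esub> k)}"

context group
begin

lemma conj_nat_pow:
  assumes "g \<in> carrier G" "x \<in> carrier G"
  shows "(g \<otimes> x \<otimes> inv g) [^] (k::nat) = g \<otimes> x [^] k \<otimes> inv g"
  by (induction k) (simp_all add: assms m_assoc flip: m_assoc[of "inv g"])

lemma pth_powers_subset: "pth_powers G p \<subseteq> carrier G"
  by (auto simp: pth_powers_def)

lemma one_in_pth_powers: "\<one> \<in> pth_powers G p"
  unfolding pth_powers_def by (rule image_eqI[of _ _ \<one>]) simp_all

lemma nat_pow_in_pth_powers:
  assumes "q \<in> pth_powers G p"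
  shows "q [^] (k::nat) \<in> pth_powers G p"
proof -
  obtain y where "y \<in> carrier G" "q = y [^] p"
    using assms by (auto simp: pth_powers_def)
  then have "q [^] k = (y [^] k) [^] p"
    by (simp add: nat_pow_pow mult.commute)
  then show ?thesis
    using \<open>y \<in> carrier G\<close> by (auto simp: pth_powers_def)
qed

lemma conj_in_pth_powers:
  assumes "g \<in> carrier G" "q \<in> pth_powers G p"
  shows "g \<otimes> q \<otimes> inv g \<in> pth_powers G p"
proof -
  obtain y where "y \<in> carrier G" "q = y [^] p"
    using assms by (auto simp: pth_powers_def)
  then have "g \<otimes> q \<otimes> inv g = (g \<otimes> y \<otimes> inv g) [^] p"
    using assms by (simp add: conj_nat_pow)
  then show ?thesis
    using \<open>y \<in> carrier G\<close> assms by (auto simp: pth_powers_def)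
qed

lemma conj_in_pth_powers_iff:
  assumes "g \<in> carrier G" "x \<in> carrier G"
  shows "g \<otimes> x \<otimes> inv g \<in> pth_powers G p \<longleftrightarrow> x \<in> pth_powers G p"
proof
  assume "g \<otimes> x \<otimes> inv g \<in> pth_powers G p"
  then have "inv g \<otimes> (g \<otimes> x \<otimes> inv g) \<otimes> inv (inv g) \<in> pth_powers G p"
    by (rule conj_in_pth_powers[OF inv_closed[OF assms(1)]])
  moreover have "inv g \<otimes> (g \<otimes> x \<otimes> inv g) \<otimes> inv (inv g) = x"
    using assms by (simp add: m_assoc flip: m_assoc[of "inv g" g])
  ultimately show "x \<in> pth_powers G p"
    by simp
qed (use assms conj_in_pth_powers in auto)

lemma conj_power_rel_conj:
  assumes "x \<in> carrier G - pth_powers G p" "g \<in> carrier G"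
  shows "(x, g \<otimes> x \<otimes> inv g) \<in> conj_power_rel G p"
  using assms conj_in_pth_powers_iff[of g x]
  by (auto simp: conj_power_rel_def intro!: bexI[of _ g] exI[of _ "1::nat"])

lemma conj_set_one: "C \<subseteq> carrier G \<Longrightarrow> conj_set G \<one> C = C"
  unfolding conj_set_def by (auto simp: subset_iff)

lemma conj_set_mult:
  assumes "C \<subseteq> carrier G" "g \<in> carrier G" "h \<in> carrier G"
  shows "conj_set G h (conj_set G g C) = conj_set G (h \<otimes> g) C"
  unfolding conj_set_def image_image
  using assms by (intro image_cong) (auto simp: m_assoc inv_mult_group subset_iff)

lemma max_cyclic_conj_rel_equiv: "equiv (max_cyclic_subgroups G) (max_cyclic_conj_rel G)"
proof (rule equivI)
  have carrier: "C \<subseteq> carrier G" if "C \<in> max_cyclic_subgroups G" for C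
    using that generate_incl
    by (auto simp: max_cyclic_subgroups_def cyclic_subgroups_def)
  show "refl_on (max_cyclic_subgroups G) (max_cyclic_conj_rel G)"
    using carrier conj_set_one
    by (auto simp: refl_on_def max_cyclic_conj_rel_def intro!: bexI[of _ \<one>])
  show "sym (max_cyclic_conj_rel G)"
  proof (rule symI)
    fix C D assume "(C, D) \<in> max_cyclic_conj_rel G"
    then obtain g where "g \<in> carrier G" "D = conj_set G g C" "C \<in> max_cyclic_subgroups G"
      "D \<in> max_cyclic_subgroups G"
      by (auto simp: max_cyclic_conj_rel_def)
    moreover have "conj_set G (inv g) (conj_set G g C) = C"
      using calculation carrier by (simp add: conj_set_mult conj_set_one)
    ultimately show "(D, C) \<in> max_cyclic_conj_rel G"
      by (auto simp: max_cyclic_conj_rel_def)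
  qed
  show "trans (max_cyclic_conj_rel G)"
  proof (rule transI)
    fix C D E assume "(C, D) \<in> max_cyclic_conj_rel G" "(D, E) \<in> max_cyclic_conj_rel G"
    then obtain g g' where "g \<in> carrier G" "g' \<in> carrier G" "D = conj_set G g C"
      "E = conj_set G g' D" "C \<in> max_cyclic_subgroups G" "E \<in> max_cyclic_subgroups G"
      by (auto simp: max_cyclic_conj_rel_def)
    moreover have "E = conj_set G (g' \<otimes> g) C"
      using calculation carrier by (simp add: conj_set_mult)
    ultimately show "(C, E) \<in> max_cyclic_conj_rel G"
      by (auto simp: max_cyclic_conj_rel_def)
  qed
qed (auto simp: max_cyclic_conj_rel_def)

lemma generate_subset_if_mem:
  assumes "b \<in> carrier G" "a \<in> generate G {b}"
  shows "generate G {a} \<subseteq> generate G {b}"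
  using assms by (simp add: generate_is_subgroup generate_subgroup_incl)

lemma conj_set_generate:
  assumes "finite (carrier G)" "g \<in> carrier G" "a \<in> carrier G"
  shows "conj_set G g (generate G {a}) = generate G {g \<otimes> a \<otimes> inv g}"
proof -
  have "conj_set G g {a [^] k | k. k \<in> (UNIV :: nat set)} =
      {(g \<otimes> a \<otimes> inv g) [^] k | k. k \<in> (UNIV :: nat set)}"
    using assms by (auto simp: conj_set_def conj_nat_pow)
  then show ?thesis
    using assms by (simp add: generate_pow_on_finite_carrier)
qed

end

context group_hom
begin

lemma hom_conj_nat_pow:
  assumes "g \<in> carrier G" "x \<in> carrier G"
  shows "h ((g \<otimes> x \<otimes> inv g) [^] (k::nat)) = (h g \<otimes>\<^bsub>H\<^esub> h x \<otimes>\<^bsub>H\<^esub> inv\<^bsub>H\<^esub> h g) [^]\<^bsub>H\<^esub> k"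
  using assms by (simp add: hom_nat_pow)

lemma image_pth_powers:
  assumes "h ` carrier G = carrier H"
  shows "h ` pth_powers G p = pth_powers H p"
proof -
  have "h ` pth_powers G p = (\<lambda>y. h y [^]\<^bsub>H\<^esub> p) ` carrier G"
    unfolding pth_powers_def image_image by (rule image_cong[OF refl hom_nat_pow])
  also have "\<dots> = pth_powers H p"
    unfolding pth_powers_def assms[symmetric] image_image ..
  finally show ?thesis .
qed

lemma hom_conj_power_rel:
  assumes "(x, y) \<in> conj_power_rel G p" "h x \<notin> pth_powers H p" "h y \<notin> pth_powers H p"
  shows "(h x, h y) \<in> conj_power_rel H p"
proof -
  obtain g k where "g \<in> carrier G" "y = (g \<otimes> x \<otimes> inv g) [^] (k::nat)"
    using assms(1) by (auto simp: conj_power_rel_def)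
  then have "h y = (h g \<otimes>\<^bsub>H\<^esub> h x \<otimes>\<^bsub>H\<^esub> inv\<^bsub>H\<^esub> h g) [^]\<^bsub>H\<^esub> k"
    using assms(1) by (simp add: conj_power_rel_def hom_conj_nat_pow del: hom_inv)
  then show ?thesis
    using assms \<open>g \<in> carrier G\<close> by (auto simp: conj_power_rel_def simp del: hom_inv)
qed

lemma hom_eq_imp_kernel_mult:
  assumes "x \<in> carrier G" "y \<in> carrier G" "h x = h y"
  shows "\<exists>m\<in>kernel G H h. x = m \<otimes> y"
proof
  show "x \<otimes> inv y \<in> kernel G H h"
    using assms by (simp add: kernel_def)
  show "x = x \<otimes> inv y \<otimes> y"
    using assms by (simp add: G.m_assoc)
qed

end

locale nontrivial_p_group = group G for G (structure) + fixes p :: nat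
  assumes prime: "Factorial_Ring.prime p"
    and order_eq_prime_power: "\<exists>n. order G = p ^ n"
    and nontrivial: "carrier G \<noteq> {\<one>}"
begin

lemma finite_carrier: "finite (carrier G)"
  using order_eq_prime_power prime order_gt_0_iff_finite by (auto simp: prime_gt_0_nat)

lemma ord_eq_prime_power:
  assumes "a \<in> carrier G"
  shows "\<exists>m. ord a = p ^ m"
  using ord_dvd_group_order[OF assms] order_eq_prime_power divides_primepow_nat[OF prime]
  by auto

text \<open>If \<open>a = b [^] k\<close> with \<open>p\<close> not dividing \<open>k\<close>, then \<open>k\<close> is prime to the order of \<open>b\<close>,
  so \<open>a\<close> generates the same subgroup as \<open>b\<close>.\<close>
lemma pth_power_if_generate_psubset:
  assumes a: "a \<in> carrier G" and b: "b \<in> carrier G"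
    and psubset: "generate G {a} \<subset> generate G {b}"
  shows "a \<in> pth_powers G p"
proof -
  obtain k :: nat where k: "a = b [^] k"
    using psubset generate.incl[of a "{a}" G] generate_pow_on_finite_carrier[OF finite_carrier b]
    by auto
  show ?thesis
  proof (cases "p dvd k")
    case True
    then obtain j where "k = p * j" ..
    then have "a = (b [^] j) [^] p"
      using k b by (simp add: nat_pow_pow mult.commute)
    then show ?thesis
      using b by (auto simp: pth_powers_def)
  next
    case False
    obtain m where "ord b = p ^ m"
      using ord_eq_prime_power b by blast
    then have "coprime k (ord b)"
      using prime_imp_coprime[OF prime False] by (simp add: coprime_commute)
    then have "card (generate G {a}) = card (generate G {b})"
      using k a b pow_ord_eq_ord_iff[OF finite_carrier b] by (simp add: generate_pow_card)
    moreover have "card (generate G {a}) < card (generate G {b})"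
      using psubset finite_carrier b generate_incl
      by (meson psubset_card_mono finite_subset empty_subsetI insert_subset)
    ultimately show ?thesis
      by simp
  qed
qed

lemma generate_psubset_if_pth_power:
  assumes "a \<in> pth_powers G p"
  shows "\<exists>b\<in>carrier G. generate G {a} \<subset> generate G {b}"
proof -
  obtain c where c: "c \<in> carrier G" "a = c [^] p"
    using assms by (auto simp: pth_powers_def)
  show ?thesis
  proof (cases "c = \<one>")
    case True
    obtain z where z: "z \<in> carrier G" "z \<noteq> \<one>"
      using nontrivial by blast
    have "generate G {a} = {\<one>}"
      using True c by (simp add: generate_pow_on_finite_carrier[OF finite_carrier])
    moreover have "{\<one>} \<subset> generate G {z}"
      using z generate.one generate.incl[of z "{z}" G] by blast
    ultimately show ?thesis
      using z by blast
  next
    case False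
    obtain m where m: "ord c = p ^ m"
      using ord_eq_prime_power c by blast
    with False c have "m \<noteq> 0"
      using ord_eq_1 by force
    then have "ord a = ord c div p"
      using c m prime by (simp add: ord_pow prime_gt_0_nat)
    moreover have "ord c > 0"
      using ord_ge_1[OF finite_carrier c(1)] by simp
    ultimately have "card (generate G {a}) < card (generate G {c})"
      using c prime_gt_1_nat[OF prime] by (simp add: generate_pow_card)
    moreover have "generate G {a} \<subseteq> generate G {c}"
      using c by (intro generate_subset_if_mem) (auto simp: generate_pow_on_finite_carrier[OF finite_carrier])
    ultimately show ?thesis
      using c by (auto intro!: bexI[of _ c])
  qed
qed

lemma max_cyclic_subgroups_eq:
  "max_cyclic_subgroups G = (\<lambda>a. generate G {a}) ` (carrier G - pth_powers G p)"
proof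
  show "max_cyclic_subgroups G \<subseteq> (\<lambda>a. generate G {a}) ` (carrier G - pth_powers G p)"
  proof
    fix C assume C: "C \<in> max_cyclic_subgroups G"
    then obtain a where a: "a \<in> carrier G" "C = generate G {a}"
      by (auto simp: max_cyclic_subgroups_def cyclic_subgroups_def)
    have "a \<notin> pth_powers G p"
    proof
      assume "a \<in> pth_powers G p"
      then obtain b where "b \<in> carrier G" "C \<subset> generate G {b}"
        using generate_psubset_if_pth_power a(2) by blast
      then show False
        using C by (auto simp: max_cyclic_subgroups_def cyclic_subgroups_def)
    qed
    then show "C \<in> (\<lambda>a. generate G {a}) ` (carrier G - pth_powers G p)"
      using a by blast
  qed
  show "(\<lambda>a. generate G {a}) ` (carrier G - pth_powers G p) \<subseteq> max_cyclic_subgroups G"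
  proof clarify
    fix a assume a: "a \<in> carrier G" "a \<notin> pth_powers G p"
    then have "\<not> (\<exists>D \<in> cyclic_subgroups G. generate G {a} \<subset> D)"
      using pth_power_if_generate_psubset by (auto simp: cyclic_subgroups_def)
    then show "generate G {a} \<in> max_cyclic_subgroups G"
      using a by (auto simp: max_cyclic_subgroups_def cyclic_subgroups_def)
  qed
qed

text \<open>Some \<open>w \<noteq> \<one>\<close> has \<open>w [^] p = \<one>\<close>, so \<open>y \<mapsto> y [^] p\<close> is not injective on the finite
  carrier.\<close>
lemma pth_powers_neq_carrier: "pth_powers G p \<noteq> carrier G"
proof
  assume "pth_powers G p = carrier G"
  then have inj: "inj_on (\<lambda>y. y [^] p) (carrier G)"
    using finite_carrier by (simp add: pth_powers_def eq_card_imp_inj_on)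
  obtain z where z: "z \<in> carrier G" "z \<noteq> \<one>"
    using nontrivial by blast
  obtain m where m: "ord z = p ^ m"
    using ord_eq_prime_power z(1) by blast
  with z have "m \<noteq> 0"
    using ord_eq_1 by force
  define w where "w = z [^] (p ^ (m - 1))"
  have "p ^ (m - 1) * p = ord z"
    using \<open>m \<noteq> 0\<close> m by (simp flip: power_Suc2)
  then have w_pow: "w [^] p = \<one> [^] p"
    using z by (simp add: w_def nat_pow_pow)
  have "w \<in> carrier G"
    using z by (simp add: w_def)
  moreover have "w \<noteq> \<one>"
  proof
    assume "w = \<one>"
    then have "ord z dvd p ^ (m - 1)"
      using pow_eq_id z(1) by (simp add: w_def)
    then have "m \<le> m - 1"
      using m power_dvd_imp_le prime_gt_1_nat[OF prime] by simp
    then show False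
      using \<open>m \<noteq> 0\<close> by simp
  qed
  ultimately show False
    using inj_onD[OF inj w_pow] by simp
qed

lemma generate_eq_iff_mem:
  assumes "x \<in> carrier G - pth_powers G p" "c \<in> carrier G - pth_powers G p"
  shows "generate G {x} = generate G {c} \<longleftrightarrow> x \<in> generate G {c}"
  using assms generate_subset_if_mem pth_power_if_generate_psubset generate.incl[of x "{x}" G]
  by blast

lemma eta_eq_card_quotient: "eta G = card ((carrier G - pth_powers G p) // conj_power_rel G p)"
  and equiv_conj_power_rel: "equiv (carrier G - pth_powers G p) (conj_power_rel G p)"
proof -
  let ?A = "carrier G - pth_powers G p"
  have conj_generate_iff: "generate G {y} = conj_set G g (generate G {x}) \<longleftrightarrow>
      (\<exists>k::nat. y = (g \<otimes> x \<otimes> inv g) [^] k)"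
    if "x \<in> ?A" "y \<in> ?A" "g \<in> carrier G" for x y g
  proof -
    have "g \<otimes> x \<otimes> inv g \<in> ?A"
      using that conj_in_pth_powers_iff by auto
    then have "generate G {y} = generate G {g \<otimes> x \<otimes> inv g} \<longleftrightarrow>
        y \<in> generate G {g \<otimes> x \<otimes> inv g}"
      using that by (simp add: generate_eq_iff_mem)
    also have "\<dots> \<longleftrightarrow> (\<exists>k::nat. y = (g \<otimes> x \<otimes> inv g) [^] k)"
      using that by (auto simp: generate_pow_on_finite_carrier[OF finite_carrier])
    finally show ?thesis
      using that by (simp add: conj_set_generate[OF finite_carrier])
  qed
  have "(generate G {x}, generate G {y}) \<in> max_cyclic_conj_rel G \<longleftrightarrow>
      (x, y) \<in> conj_power_rel G p" if "x \<in> ?A" "y \<in> ?A" for x y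
  proof -
    have "(generate G {x}, generate G {y}) \<in> max_cyclic_conj_rel G \<longleftrightarrow>
        (\<exists>g\<in>carrier G. generate G {y} = conj_set G g (generate G {x}))"
      using that max_cyclic_subgroups_eq by (auto simp: max_cyclic_conj_rel_def)
    also have "\<dots> \<longleftrightarrow> (x, y) \<in> conj_power_rel G p"
      using that conj_generate_iff[OF that] by (auto simp: conj_power_rel_def)
    finally show ?thesis .
  qed
  moreover have "conj_power_rel G p \<subseteq> ?A \<times> ?A"
    by (auto simp: conj_power_rel_def)
  ultimately have
    "inv_image (max_cyclic_conj_rel G) (\<lambda>a. generate G {a}) \<inter> ?A \<times> ?A = conj_power_rel G p"
    by auto
  then show "eta G = card (?A // conj_power_rel G p)" "equiv ?A (conj_power_rel G p)"
    using card_quotient_inv_image[OF max_cyclic_subgroups_eq[symmetric] max_cyclic_conj_rel_equiv]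
    by (simp_all add: eta_def)
qed

lemma conj_power_rel_refl: "x \<in> carrier G - pth_powers G p \<Longrightarrow> (x, x) \<in> conj_power_rel G p"
  using equiv_conj_power_rel by (simp add: equiv_def refl_on_def)

lemma conj_power_rel_sym: "(x, y) \<in> conj_power_rel G p \<Longrightarrow> (y, x) \<in> conj_power_rel G p"
  using equiv_conj_power_rel by (auto simp: equiv_def dest: symD)

lemma conj_power_rel_trans:
  "(x, y) \<in> conj_power_rel G p \<Longrightarrow> (y, z) \<in> conj_power_rel G p \<Longrightarrow> (x, z) \<in> conj_power_rel G p"
  using equiv_conj_power_rel by (auto simp: equiv_def dest: transD)

end

definition eta_core :: "('a, 'b) monoid_scheme \<Rightarrow> nat \<Rightarrow> 'a set" where
  "eta_core G p =
     {m \<in> carrier G. \<forall>x \<in> carrier G - pth_powers G p. (x, m \<otimes>\<^bsub>G\<^esub> x) \<in> conj_power_rel G p}"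

context nontrivial_p_group
begin

lemma eta_core_image:
  assumes "m \<in> eta_core G p"
  shows "(\<lambda>x. m \<otimes> x) ` (carrier G - pth_powers G p) = carrier G - pth_powers G p"
proof (rule endo_inj_surj)
  show "finite (carrier G - pth_powers G p)"
    using finite_carrier by simp
  show "(\<lambda>x. m \<otimes> x) ` (carrier G - pth_powers G p) \<subseteq> carrier G - pth_powers G p"
    using assms by (auto simp: eta_core_def conj_power_rel_def)
  show "inj_on (\<lambda>x. m \<otimes> x) (carrier G - pth_powers G p)"
    using assms inj_on_cmult by (auto simp: eta_core_def intro: inj_on_subset)
qed

lemma eta_core_mult_pth_power:
  assumes m: "m \<in> eta_core G p" and q: "q \<in> pth_powers G p"
  shows "m \<otimes> q \<in> pth_powers G p"
proof (rule ccontr)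
  have carrier: "m \<in> carrier G" "q \<in> carrier G"
    using m q pth_powers_subset by (auto simp: eta_core_def)
  assume "m \<otimes> q \<notin> pth_powers G p"
  then obtain x where "x \<in> carrier G - pth_powers G p" "m \<otimes> q = m \<otimes> x"
    using eta_core_image[OF m] carrier by (metis DiffI image_iff m_closed)
  then show False
    using carrier q by simp
qed

lemma eta_core_subset_pth_powers: "eta_core G p \<subseteq> pth_powers G p"
  using eta_core_mult_pth_power[of _ \<one>] one_in_pth_powers by (force simp: eta_core_def)

lemma eta_core_mult_conj_power:
  assumes m: "m \<in> eta_core G p" and x: "x \<in> carrier G - pth_powers G p" and "g \<in> carrier G"
    and y: "y = m \<otimes> (g \<otimes> x \<otimes> inv g) [^] (k::nat)" "y \<notin> pth_powers G p"
  shows "(x, y) \<in> conj_power_rel G p"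
proof -
  let ?w = "(g \<otimes> x \<otimes> inv g) [^] k"
  have "?w \<notin> pth_powers G p"
    using y m eta_core_mult_pth_power by blast
  then have "(x, ?w) \<in> conj_power_rel G p"
    using x \<open>g \<in> carrier G\<close> by (auto simp: conj_power_rel_def)
  moreover have "(?w, m \<otimes> ?w) \<in> conj_power_rel G p"
    using m \<open>?w \<notin> pth_powers G p\<close> x \<open>g \<in> carrier G\<close> by (simp add: eta_core_def)
  ultimately show ?thesis
    using y conj_power_rel_trans by blast
qed

lemma subgroup_eta_core: "subgroup (eta_core G p) G"
proof (rule subgroupI)
  show "eta_core G p \<subseteq> carrier G"
    by (auto simp: eta_core_def)
  show "eta_core G p \<noteq> {}"
    using conj_power_rel_refl by (auto simp: eta_core_def)
  show "inv m \<in> eta_core G p" if m: "m \<in> eta_core G p" for m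
  proof -
    have "(x, inv m \<otimes> x) \<in> conj_power_rel G p" if x: "x \<in> carrier G - pth_powers G p" for x
    proof -
      obtain z where z: "z \<in> carrier G - pth_powers G p" "x = m \<otimes> z"
        using eta_core_image[OF m] x by blast
      then have "inv m \<otimes> x = z"
        using m by (simp add: eta_core_def flip: m_assoc)
      then show ?thesis
        using m z conj_power_rel_sym by (simp add: eta_core_def)
    qed
    then show ?thesis
      using m by (simp add: eta_core_def)
  qed
  show "m \<otimes> m' \<in> eta_core G p" if m: "m \<in> eta_core G p" and m': "m' \<in> eta_core G p" for m m'
  proof -
    have "(x, m \<otimes> m' \<otimes> x) \<in> conj_power_rel G p" if x: "x \<in> carrier G - pth_powers G p" for x
    proof -
      have "(x, m' \<otimes> x) \<in> conj_power_rel G p"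
        using m' x by (simp add: eta_core_def)
      moreover from this have "(m' \<otimes> x, m \<otimes> (m' \<otimes> x)) \<in> conj_power_rel G p"
        using m by (simp add: eta_core_def conj_power_rel_def)
      ultimately have "(x, m \<otimes> (m' \<otimes> x)) \<in> conj_power_rel G p"
        by (rule conj_power_rel_trans)
      then show ?thesis
        using m m' x by (simp add: eta_core_def m_assoc)
    qed
    then show ?thesis
      using m m' by (simp add: eta_core_def)
  qed
qed

lemma normal_eta_core: "eta_core G p \<lhd> G"
  unfolding normal_inv_iff
proof (intro conjI subgroup_eta_core ballI)
  fix h m assume h: "h \<in> carrier G" and m: "m \<in> eta_core G p"
  have "(x, h \<otimes> m \<otimes> inv h \<otimes> x) \<in> conj_power_rel G p" if x: "x \<in> carrier G - pth_powers G p" for x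
  proof -
    define x' where "x' = inv h \<otimes> x \<otimes> h"
    have "(x, x') \<in> conj_power_rel G p"
      using conj_power_rel_conj[OF x inv_closed[OF h]] h by (simp add: x'_def)
    moreover from this have "(x', m \<otimes> x') \<in> conj_power_rel G p"
      using m by (simp add: eta_core_def conj_power_rel_def)
    moreover from this have "(m \<otimes> x', h \<otimes> (m \<otimes> x') \<otimes> inv h) \<in> conj_power_rel G p"
      using h by (intro conj_power_rel_conj) (simp_all add: conj_power_rel_def)
    moreover have "h \<otimes> (m \<otimes> x') \<otimes> inv h = h \<otimes> m \<otimes> inv h \<otimes> x"
      using h m x by (simp add: x'_def eta_core_def m_assoc)
    ultimately show ?thesis
      using conj_power_rel_trans by metis
  qed
  then show "h \<otimes> m \<otimes> inv h \<in> eta_core G p"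
    using h m by (simp add: eta_core_def)
qed

lemma iso_image_eta_core:
  assumes "f \<in> iso G G"
  shows "f ` eta_core G p = eta_core G p"
proof -
  interpret f: group_hom G G f
    using assms by (simp add: group_hom_def group_hom_axioms_def is_group iso_def)
  have inj: "inj_on f (carrier G)" and surj: "f ` carrier G = carrier G"
    using assms by (auto simp: iso_def bij_betw_def)
  have f_pth_powers: "f x \<in> pth_powers G p \<longleftrightarrow> x \<in> pth_powers G p" if "x \<in> carrier G" for x
    using that inj pth_powers_subset f.image_pth_powers[OF surj]
    by (metis inj_on_image_mem_iff)
  have "f m \<in> eta_core G p" if m: "m \<in> eta_core G p" for m
  proof -
    have "(x, f m \<otimes> x) \<in> conj_power_rel G p" if x: "x \<in> carrier G - pth_powers G p" for x
    proof -
      obtain x' where x': "x' \<in> carrier G" "x = f x'"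
        using surj x by auto
      then have "(x', m \<otimes> x') \<in> conj_power_rel G p"
        using m x f_pth_powers by (simp add: eta_core_def)
      then have "(f x', f (m \<otimes> x')) \<in> conj_power_rel G p"
        using f_pth_powers by (intro f.hom_conj_power_rel) (auto simp: conj_power_rel_def)
      then show ?thesis
        using x' m by (simp add: eta_core_def)
    qed
    then show ?thesis
      using m by (simp add: eta_core_def)
  qed
  then show ?thesis
    using inj finite_carrier subgroup.subset[OF subgroup_eta_core]
    by (intro endo_inj_surj) (auto intro: finite_subset inj_on_subset)
qed

lemma characteristic_eta_core: "characteristic G (eta_core G p)"
  using subgroup_eta_core iso_image_eta_core by (simp add: characteristic_def)

end

locale nontrivial_p_group_epi =
  G: nontrivial_p_group G p + H: nontrivial_p_group H p + group_hom G H h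
  for G (structure) and H (structure) and p and h +
  assumes surj: "h ` carrier G = carrier H"
begin

abbreviation lifted_non_pth_powers where
  "lifted_non_pth_powers \<equiv> {x \<in> carrier G. h x \<notin> pth_powers H p}"

abbreviation lifted_conj_power_rel where
  "lifted_conj_power_rel \<equiv>
     inv_image (conj_power_rel H p) h \<inter> lifted_non_pth_powers \<times> lifted_non_pth_powers"

lemma eta_codomain_eq_card_quotient:
  "eta H = card (lifted_non_pth_powers // lifted_conj_power_rel)"
  and equiv_lifted_conj_power_rel: "equiv lifted_non_pth_powers lifted_conj_power_rel"
proof -
  have image: "h ` lifted_non_pth_powers = carrier H - pth_powers H p"
    using surj by auto
  show "eta H = card (lifted_non_pth_powers // lifted_conj_power_rel)"
    "equiv lifted_non_pth_powers lifted_conj_power_rel"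
    using card_quotient_inv_image[OF image H.equiv_conj_power_rel] H.eta_eq_card_quotient
    by simp_all
qed

lemma lifted_non_pth_powers_subset: "lifted_non_pth_powers \<subseteq> carrier G - pth_powers G p"
  using image_pth_powers[OF surj] by auto

text \<open>The lifted set is saturated for \<^term>\<open>conj_power_rel G p\<close> because \<open>h\<close> maps conjugates
  and powers of a \<open>p\<close>-th power to \<open>p\<close>-th powers.\<close>
lemma conj_power_rel_imp_lifted:
  assumes x: "x \<in> lifted_non_pth_powers" and xy: "(x, y) \<in> conj_power_rel G p"
  shows "(x, y) \<in> lifted_conj_power_rel"
proof -
  obtain g k where g: "g \<in> carrier G" and "x = (g \<otimes> y \<otimes> inv g) [^] (k::nat)"
    and y: "y \<in> carrier G - pth_powers G p"
    using G.conj_power_rel_sym[OF xy] by (auto simp: conj_power_rel_def)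
  then have "h x = (h g \<otimes>\<^bsub>H\<^esub> h y \<otimes>\<^bsub>H\<^esub> inv\<^bsub>H\<^esub> h g) [^]\<^bsub>H\<^esub> k"
    by (simp add: hom_conj_nat_pow)
  then have "h y \<notin> pth_powers H p"
    using x g y H.nat_pow_in_pth_powers H.conj_in_pth_powers by auto
  then show ?thesis
    using x xy y hom_conj_power_rel by auto
qed

text \<open>The lifted set is a saturated subset of \<open>carrier G - pth_powers G p\<close> carrying a
  coarser relation, so equal class counts force both to coincide.\<close>
lemma eta_eq_imp_kernel_subset:
  assumes "eta H = eta G"
  shows "kernel G H h \<subseteq> eta_core G p"
proof
  have "card (lifted_non_pth_powers // lifted_conj_power_rel) =
      card ((carrier G - pth_powers G p) // conj_power_rel G p)"
    using assms by (simp add: eta_codomain_eq_card_quotient G.eta_eq_card_quotient)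
  then have lifted_eq: "lifted_non_pth_powers = carrier G - pth_powers G p"
    and lifted_rel_eq: "lifted_conj_power_rel = conj_power_rel G p"
    using card_quotient_coarsening_eq[OF finite_Diff[OF G.finite_carrier] G.equiv_conj_power_rel
        equiv_lifted_conj_power_rel lifted_non_pth_powers_subset conj_power_rel_imp_lifted]
    by blast+
  fix m assume m: "m \<in> kernel G H h"
  have "(x, m \<otimes> x) \<in> conj_power_rel G p" if x: "x \<in> carrier G - pth_powers G p" for x
  proof -
    have "h (m \<otimes> x) = h x" "m \<otimes> x \<in> carrier G"
      using m x by (simp_all add: kernel_def)
    moreover have "x \<in> lifted_non_pth_powers"
      using x lifted_eq by blast
    ultimately have "(x, m \<otimes> x) \<in> lifted_conj_power_rel"
      using H.conj_power_rel_refl by simp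
    then show ?thesis
      using lifted_rel_eq by simp
  qed
  then show "m \<in> eta_core G p"
    using m by (simp add: eta_core_def kernel_def)
qed

lemma kernel_subset_imp_lifted_eq:
  assumes kernel: "kernel G H h \<subseteq> eta_core G p"
  shows "lifted_non_pth_powers = carrier G - pth_powers G p"
proof
  show "carrier G - pth_powers G p \<subseteq> lifted_non_pth_powers"
  proof clarify
    fix x assume x: "x \<in> carrier G" "x \<notin> pth_powers G p" and "h x \<in> pth_powers H p"
    then obtain q where q: "q \<in> pth_powers G p" "h x = h q"
      using image_pth_powers[OF surj] by (metis imageE)
    then obtain m where "m \<in> kernel G H h" "x = m \<otimes> q"
      using hom_eq_imp_kernel_mult x G.pth_powers_subset by blast
    then show False
      using kernel G.eta_core_mult_pth_power x q by auto
  qed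
qed (rule lifted_non_pth_powers_subset)

lemma kernel_subset_imp_lifted_rel_subset:
  assumes kernel: "kernel G H h \<subseteq> eta_core G p"
  shows "lifted_conj_power_rel \<subseteq> conj_power_rel G p"
proof
  fix z assume "z \<in> lifted_conj_power_rel"
  then obtain x y where z: "z = (x, y)" and "(h x, h y) \<in> conj_power_rel H p"
    and x: "x \<in> lifted_non_pth_powers" and y: "y \<in> lifted_non_pth_powers"
    by auto
  then obtain g' k where "g' \<in> carrier H"
    and "h y = (g' \<otimes>\<^bsub>H\<^esub> h x \<otimes>\<^bsub>H\<^esub> inv\<^bsub>H\<^esub> g') [^]\<^bsub>H\<^esub> (k::nat)"
    by (auto simp: conj_power_rel_def)
  moreover obtain g where g: "g \<in> carrier G" "g' = h g"
    using surj \<open>g' \<in> carrier H\<close> by auto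
  ultimately have "h y = h ((g \<otimes> x \<otimes> inv g) [^] k)"
    using x by (simp add: hom_conj_nat_pow)
  moreover have "(g \<otimes> x \<otimes> inv g) [^] k \<in> carrier G"
    using g(1) x by simp
  ultimately obtain m where "m \<in> kernel G H h" "y = m \<otimes> (g \<otimes> x \<otimes> inv g) [^] k"
    using hom_eq_imp_kernel_mult y by blast
  moreover have "x \<in> carrier G - pth_powers G p" "y \<notin> pth_powers G p"
    using x y kernel_subset_imp_lifted_eq[OF kernel] by auto
  ultimately show "z \<in> conj_power_rel G p"
    using G.eta_core_mult_conj_power[of m x g y k] kernel g z by blast
qed

lemma kernel_subset_imp_eta_eq:
  assumes kernel: "kernel G H h \<subseteq> eta_core G p"
  shows "eta H = eta G"
proof -
  note lifted_eq = kernel_subset_imp_lifted_eq[OF kernel]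
  have "conj_power_rel G p \<subseteq> lifted_conj_power_rel"
  proof
    fix z assume z: "z \<in> conj_power_rel G p"
    then obtain x y where "z = (x, y)" "x \<in> carrier G - pth_powers G p"
      by (auto simp: conj_power_rel_def)
    then show "z \<in> lifted_conj_power_rel"
      using z conj_power_rel_imp_lifted lifted_eq by blast
  qed
  then have "lifted_conj_power_rel = conj_power_rel G p"
    using kernel_subset_imp_lifted_rel_subset[OF kernel] by (rule subset_antisym[rotated])
  then show ?thesis
    using lifted_eq by (simp add: eta_codomain_eq_card_quotient G.eta_eq_card_quotient)
qed

lemma eta_eq_iff_kernel_subset: "eta H = eta G \<longleftrightarrow> kernel G H h \<subseteq> eta_core G p"
  using eta_eq_imp_kernel_subset kernel_subset_imp_eta_eq by blast

end

lemma (in normal) kernel_r_coset_Mod: "kernel G (G Mod H) (\<lambda>a. H #> a) = H"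
proof (intro equalityI subsetI)
  fix x assume "x \<in> kernel G (G Mod H) (\<lambda>a. H #> a)"
  then show "x \<in> H"
    using coset_join1 subgroup_axioms by (simp add: kernel_def)
next
  fix x assume "x \<in> H"
  then show "x \<in> kernel G (G Mod H) (\<lambda>a. H #> a)"
    using coset_join2[OF _ subgroup_axioms] subset by (auto simp: kernel_def)
qed

context nontrivial_p_group
begin

lemma nontrivial_p_group_FactGroup:
  assumes "N \<lhd> G" "N \<noteq> carrier G"
  shows "nontrivial_p_group (G Mod N) p"
proof -
  interpret N: normal N G
    by fact
  have "order (G Mod N) * card N = order G"
    using lagrange[OF N.subgroup_axioms] by (simp add: order_def FactGroup_def)
  then have "order (G Mod N) dvd order G"
    by (metis dvd_triv_left)
  then have "\<exists>n. order (G Mod N) = p ^ n"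
    using order_eq_prime_power divides_primepow_nat[OF prime] by auto
  moreover have "carrier (G Mod N) \<noteq> {\<one>\<^bsub>G Mod N\<^esub>}"
  proof -
    obtain x where "x \<in> carrier G" "x \<notin> N"
      using assms(2) N.subset by blast
    then have "N #> x \<in> carrier (G Mod N)" "N #> x \<noteq> N"
      using coset_join1[OF _ _ N.subgroup_axioms] by (auto simp: carrier_FactGroup)
    then show ?thesis
      by auto
  qed
  ultimately show ?thesis
    using prime N.factorgroup_is_group
    by (simp add: nontrivial_p_group_def nontrivial_p_group_axioms_def)
qed

lemma eta_FactGroup_eq_iff:
  assumes "N \<lhd> G" "N \<noteq> carrier G"
  shows "eta (G Mod N) = eta G \<longleftrightarrow> N \<subseteq> eta_core G p"
proof -
  interpret N: normal N G
    by fact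
  interpret nontrivial_p_group_epi G "G Mod N" p "\<lambda>a. N #> a"
    using nontrivial_p_group_axioms nontrivial_p_group_FactGroup[OF assms] N.r_coset_hom_Mod
      is_group N.factorgroup_is_group
    by (simp add: nontrivial_p_group_epi_def nontrivial_p_group_epi_axioms_def group_hom_def
        group_hom_axioms_def carrier_FactGroup)
  show ?thesis
    using eta_eq_iff_kernel_subset N.kernel_r_coset_Mod by simp
qed

lemma eta_FactGroup_set_mult:
  assumes N: "N \<lhd> G" and M: "M \<lhd> G"
    and eta_N: "eta (G Mod N) = eta G" and eta_M: "eta (G Mod M) = eta G"
  shows "eta (G Mod (N <#> M)) = eta G"
proof (cases "N = carrier G \<or> M = carrier G")
  case True
  then have "N <#> M = carrier G"
    using set_mult_carrier_idem commut_normal normal_imp_subgroup N M by metis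
  then show ?thesis
    using True eta_N eta_M by auto
next
  case False
  then have "N \<subseteq> eta_core G p" "M \<subseteq> eta_core G p"
    using eta_FactGroup_eq_iff N M eta_N eta_M by auto
  then have "N <#> M \<subseteq> eta_core G p"
    using subgroup.m_closed[OF subgroup_eta_core] by (auto simp: set_mult_def)
  moreover have "N <#> M \<noteq> carrier G"
    using calculation eta_core_subset_pth_powers pth_powers_neq_carrier pth_powers_subset by blast
  ultimately show ?thesis
    using eta_FactGroup_eq_iff normal_subgroup_set_mult_closed[OF N M] by blast
qed

lemma ex_greatest_characteristic_eta_FactGroup_eq:
  "\<exists>K. characteristic G K \<and> eta G = eta (G Mod K) \<and>
     (\<forall>N. N \<lhd> G \<longrightarrow> eta (G Mod N) = eta G \<longrightarrow> N \<subseteq> K)"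
proof (cases "eta (G Mod carrier G) = eta G")
  case True
  \<comment> \<open>impossible for noncyclic \<open>G\<close>, but it costs nothing to keep it\<close>
  have "characteristic G (carrier G)"
    using subgroup_self by (auto simp: characteristic_def iso_def bij_betw_def)
  then show ?thesis
    using True normal_imp_subgroup subgroup.subset by metis
next
  case False
  have "eta_core G p \<noteq> carrier G"
    using eta_core_subset_pth_powers pth_powers_neq_carrier pth_powers_subset by blast
  then have "eta (G Mod eta_core G p) = eta G"
    using eta_FactGroup_eq_iff[OF normal_eta_core] by simp
  moreover have "N \<subseteq> eta_core G p" if "N \<lhd> G" "eta (G Mod N) = eta G" for N
    using eta_FactGroup_eq_iff that False by blast
  ultimately show ?thesis
    using characteristic_eta_core by metis
qed

end

theorem corollary4p2:
  fixes G :: "('a, 'b) monoid_scheme" and p :: nat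
  assumes "group G" and "finite (carrier G)" and "Factorial_Ring.prime p"
    and "\<exists>n. order G = p ^ n"
    and "\<not> cyclic_group G"
  shows "(\<forall>N M. N \<lhd> G \<longrightarrow> M \<lhd> G \<longrightarrow> eta G = eta (G Mod N) \<longrightarrow> eta G = eta (G Mod M)
            \<longrightarrow> eta G = eta (G Mod (N <#>\<^bsub>G\<^esub> M)))
       \<and> (\<exists>K. characteristic G K \<and> eta G = eta (G Mod K) \<and>
            (\<forall>N. N \<lhd> G \<longrightarrow> eta (G Mod N) = eta G \<longrightarrow> N \<subseteq> K))"
proof -
  interpret nontrivial_p_group G p
    using assms trivial_imp_cyclic_group
    by (auto simp: nontrivial_p_group_def nontrivial_p_group_axioms_def trivial_group_def)
  show ?thesis
    using eta_FactGroup_set_mult ex_greatest_characteristic_eta_FactGroup_eq by auto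
qed

end
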